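(* For every integer $n\geq 2$, the graph $\mathcal{G}^3_n$ is transmission irregular, and its set of vertex transmissions equals $\{n^2+5n+10,\, n^2+5n+11,\,\dots,\, n^2+7n+16\}\cup\{n^2+8n+15\}$.
   Context: Let $G_3$ be the (disconnected) graph with vertices $a,b,c,d,e,f,g,h$ and edges $ab,ac,bc,de,dg,ef,eh,gh$. For an integer $n\ge1$, $\mathcal{G}^3_n$ is obtained from $G_3$ by adding a new path from $b$ to $d$ with $n$ new internal vertices and a new path from $c$ to $e$ with $n$ new internal vertices (each such path has length $n+1$). The transmission of a vertex $u$ in a connected graph $G$ is $Tr_G(u)=\sum_{v}d_G(u,v)$; a graph is transmission irregular if no two of its vertices have equal transmission. *)

theory Defs
  imports Main
begin

fun is_walk :: "'a set set \<Rightarrow> 'a list \<Rightarrow> bool" where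
  "is_walk E [] = False"
| "is_walk E [x] = True"
| "is_walk E (x # y # rest) = ({x, y} \<in> E \<and> is_walk E (y # rest))"

definition gdist :: "'a set \<Rightarrow> 'a set set \<Rightarrow> 'a \<Rightarrow> 'a \<Rightarrow> nat" where
  "gdist V E u v = (LEAST k. \<exists>p. is_walk E p \<and> set p \<subseteq> V \<and> hd p = u \<and> last p = v
                              \<and> length p = Suc k)"

definition transmission :: "'a set \<Rightarrow> 'a set set \<Rightarrow> 'a \<Rightarrow> nat" where
  "transmission V E u = (\<Sum>v\<in>V. gdist V E u v)"

definition transmission_irregular :: "'a set \<Rightarrow> 'a set set \<Rightarrow> bool" where
  "transmission_irregular V E \<longleftrightarrow> inj_on (transmission V E) V"

text \<open>Vertices a..h; P i (1 \<le> i \<le> n) are the internal vertices of the b--d path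
  (P 1 adjacent to b, P n adjacent to d); Q i those of the c--e path
  (Q 1 adjacent to c, Q n adjacent to e).\<close>
datatype vtx = va | vb | vc | vd | ve | vf | vg | vh | P nat | Q nat

definition G3_verts :: "nat \<Rightarrow> vtx set" where
  "G3_verts n = {va, vb, vc, vd, ve, vf, vg, vh} \<union> P ` {1..n} \<union> Q ` {1..n}"

definition G3_edges :: "nat \<Rightarrow> vtx set set" where
  "G3_edges n =
     {{va, vb}, {va, vc}, {vb, vc}, {vd, ve}, {vd, vg}, {ve, vf}, {ve, vh}, {vg, vh}}
   \<union> {{vb, P 1}, {P n, vd}, {vc, Q 1}, {Q n, ve}}
   \<union> {{P i, P (Suc i)} | i. 1 \<le> i \<and> i < n}
   \<union> {{Q i, Q (Suc i)} | i. 1 \<le> i \<and> i < n}"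

end

(*
  The vertices b, P 1, ..., P n, d, e, Q n, ..., Q 1, c form a cycle C of length 2n + 4,
  and the remaining vertices hang off it: a is adjacent to the consecutive cycle vertices b and c,
  f to e, g to d, h to e, and g to h. Hence every distance is explicit: the cyclic distance on C,
  plus one for each endpoint off C, except for the few pairs of off-cycle vertices. A function
  that vanishes at u, changes by at most one along edges and strictly decreases towards u along
  some edge from every other vertex is the distance from u, which certifies these formulas.
  Summing them, the cycle vertex at position s has transmission (n + 2)^2 + 3n + 9 - 2s for
  s <= n + 1 and (n + 2)^2 + 2s + 2 - n otherwise; these 2n + 4 values are distinct (the two
  branches have different parities) and fill [n^2 + 5n + 10, n^2 + 7n + 13], while h, g, f, a
  contribute n^2 + 7n + 14, n^2 + 7n + 15, n^2 + 7n + 16 and n^2 + 8n + 15.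
*)
theory Submission
  imports Defs
begin

section \<open>Distances certified by a potential\<close>

lemma is_walk_snoc: "is_walk E p \<Longrightarrow> {last p, v} \<in> E \<Longrightarrow> is_walk E (p @ [v])"
  by (induction E p rule: is_walk.induct) auto

lemma is_walk_last_le:
  assumes step: "\<And>x y. {x, y} \<in> E \<Longrightarrow> x \<in> V \<Longrightarrow> y \<in> V \<Longrightarrow> f y \<le> f x + 1"
  shows "is_walk E p \<Longrightarrow> set p \<subseteq> V \<Longrightarrow> f (last p) \<le> f (hd p) + (length p - 1)"
proof (induction p rule: induct_list012)
  case (3 x y rest)
  then have "f y \<le> f x + 1" using step[of x y] by auto
  with 3 show ?case by auto
qed auto

lemma gdist_eqI:
  assumes "u \<in> V" "v \<in> V" "f u = 0"
    and step: "\<And>x y. {x, y} \<in> E \<Longrightarrow> x \<in> V \<Longrightarrow> y \<in> V \<Longrightarrow> f y \<le> f x + 1"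
    and descent: "\<And>y. y \<in> V \<Longrightarrow> y \<noteq> u \<Longrightarrow> \<exists>x\<in>V. {x, y} \<in> E \<and> f x < f y"
  shows "gdist V E u v = f v"
proof -
  let ?walk = "\<lambda>w k. \<exists>p. is_walk E p \<and> set p \<subseteq> V \<and> hd p = u \<and> last p = w \<and> length p = Suc k"
  have "?walk y (f y)" if "y \<in> V" for y
    using that
  proof (induction "f y" arbitrary: y rule: less_induct)
    case less
    show ?case
    proof (cases "y = u")
      case True
      then show ?thesis using \<open>u \<in> V\<close> \<open>f u = 0\<close> by (intro exI[of _ "[u]"]) auto
    next
      case False
      then obtain x where x: "x \<in> V" "{x, y} \<in> E" "f x < f y" using descent less.prems by blast
      then have "f y = Suc (f x)" using step[of x y] less.prems by simp
      obtain p where p: "is_walk E p" "set p \<subseteq> V" "hd p = u" "last p = x" "length p = Suc (f x)"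
        using less.hyps[OF x(3,1)] by blast
      then have "p \<noteq> []" by auto
      with p x less.prems \<open>f y = Suc (f x)\<close> show ?thesis
        by (intro exI[of _ "p @ [y]"]) (auto simp: is_walk_snoc)
    qed
  qed
  moreover have "f v \<le> k" if "?walk v k" for k
    using that is_walk_last_le[of E V f, OF step] \<open>f u = 0\<close> by fastforce
  ultimately show ?thesis
    unfolding gdist_def using \<open>v \<in> V\<close> by (intro Least_equality) auto
qed

lemma sum_lessThan_double:
  "(\<Sum>i<2*m. f i) = (\<Sum>i<m. f i + f (i + m))" for f :: "nat \<Rightarrow> 'a::comm_monoid_add"
proof -
  have "(\<Sum>i<2*m. f i) = (\<Sum>i\<in>{0..<m}. f i) + (\<Sum>i\<in>{0+m..<m+m}. f i)"
    by (simp add: mult_2 sum.atLeastLessThan_concat flip: atLeast0LessThan)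
  also have "\<dots> = (\<Sum>i<m. f i + f (i + m))"
    by (simp only: sum.shift_bounds_nat_ivl sum.distrib atLeast0LessThan)
  finally show ?thesis .
qed

section \<open>Distances on a cycle\<close>

definition cyc_dist :: "nat \<Rightarrow> nat \<Rightarrow> nat \<Rightarrow> nat" where
  "cyc_dist L i j = min ((i - j) + (j - i)) (L - ((i - j) + (j - i)))"

definition cyc_adj :: "nat \<Rightarrow> nat \<Rightarrow> nat \<Rightarrow> bool" where
  "cyc_adj L i j \<longleftrightarrow> j = Suc i \<or> i = Suc j \<or> {i, j} = {0, L - 1}"

lemma cyc_dist_commute: "cyc_dist L i j = cyc_dist L j i"
  unfolding cyc_dist_def by (simp add: add.commute)

lemma cyc_dist_self [simp]: "cyc_dist L i i = 0"
  unfolding cyc_dist_def by simp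

lemma cyc_dist_adj_le:
  "i < L \<Longrightarrow> j < L \<Longrightarrow> k < L \<Longrightarrow> cyc_adj L j k \<Longrightarrow> cyc_dist L i k \<le> cyc_dist L i j + 1"
  unfolding cyc_dist_def cyc_adj_def doubleton_eq_iff by (elim disjE conjE; simp; linarith)

lemma cyc_dist_descent:
  assumes "i < L" "j < L" "i \<noteq> j"
  shows "\<exists>k<L. cyc_adj L j k \<and> cyc_dist L i k < cyc_dist L i j"
proof -
  \<comment> \<open>Step from j along a shortest arc to i: towards i if the direct arc is a shortest one,
    otherwise away from i, wrapping around between L - 1 and 0 if needed.\<close>
  let ?d = "(i - j) + (j - i)"
  have le_direct: "cyc_dist L i k \<le> (i - k) + (k - i)"
    and le_around: "cyc_dist L i k \<le> L - ((i - k) + (k - i))" for k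
    unfolding cyc_dist_def by simp_all
  consider "2 * ?d \<le> L" "i < j" | "2 * ?d \<le> L" "j < i" | "L < 2 * ?d" "i < j" "j < L - 1"
    | "L < 2 * ?d" "i < j" "j = L - 1" | "L < 2 * ?d" "j < i" "0 < j" | "L < 2 * ?d" "j < i" "j = 0"
    using assms by linarith
  then show ?thesis
  proof cases
    case 1
    then show ?thesis using le_direct[of "j - 1"] assms unfolding cyc_dist_def cyc_adj_def
      by (intro exI[of _ "j - 1"]) (auto simp: min_def)
  next
    case 2
    then show ?thesis using le_direct[of "j + 1"] assms unfolding cyc_dist_def cyc_adj_def
      by (intro exI[of _ "j + 1"]) (auto simp: min_def)
  next
    case 3
    then show ?thesis using le_around[of "j + 1"] assms unfolding cyc_dist_def cyc_adj_def
      by (intro exI[of _ "j + 1"]) (auto simp: min_def)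
  next
    case 4
    then show ?thesis using le_direct[of 0] assms unfolding cyc_dist_def cyc_adj_def
      by (intro exI[of _ 0]) (auto simp: min_def)
  next
    case 5
    then show ?thesis using le_around[of "j - 1"] assms unfolding cyc_dist_def cyc_adj_def
      by (intro exI[of _ "j - 1"]) (auto simp: min_def)
  next
    case 6
    then show ?thesis using le_direct[of "L - 1"] assms unfolding cyc_dist_def cyc_adj_def
      by (intro exI[of _ "L - 1"]) (auto simp: min_def)
  qed
qed

lemma sum_cyc_dist:
  assumes "i < 2*m"
  shows "(\<Sum>j<2*m. cyc_dist (2*m) i j) = m * m"
proof -
  \<comment> \<open>pair each position with its antipode\<close>
  have "cyc_dist (2*m) i j + cyc_dist (2*m) i (j + m) = m" if "j < m" for j
    using assms that unfolding cyc_dist_def by (simp add: min_def; linarith)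
  then show ?thesis by (simp add: sum_lessThan_double)
qed

lemma sum_min_cyc_dist_ends:
  "(\<Sum>j<2*m. min (cyc_dist (2*m) 0 j) (cyc_dist (2*m) (2*m - 1) j)) = m * (m - 1)"
proof -
  have "min (cyc_dist (2*m) 0 j) (cyc_dist (2*m) (2*m - 1) j)
        + min (cyc_dist (2*m) 0 (j + m)) (cyc_dist (2*m) (2*m - 1) (j + m)) = m - 1" if "j < m" for j
    using that unfolding cyc_dist_def by (simp add: min_def; linarith)
  then show ?thesis by (simp add: sum_lessThan_double)
qed

section \<open>The graph as a cycle with four extra vertices\<close>

fun on_cycle :: "vtx \<Rightarrow> bool" where
  "on_cycle va \<longleftrightarrow> False"
| "on_cycle vf \<longleftrightarrow> False"
| "on_cycle vg \<longleftrightarrow> False"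
| "on_cycle vh \<longleftrightarrow> False"
| "on_cycle _ \<longleftrightarrow> True"

(* anchor n v is the position of v on the cycle b, P 1, ..., P n, d, e, Q n, ..., Q 1, c,
   counted from b = 0; for a vertex off the cycle it is the position of a cycle neighbour,
   and anchor2 gives the other one (c, for a) or repeats it. *)
fun anchor :: "nat \<Rightarrow> vtx \<Rightarrow> nat" where
  "anchor n vb = 0"
| "anchor n (P i) = i"
| "anchor n vd = n + 1"
| "anchor n ve = n + 2"
| "anchor n (Q i) = 2*n + 3 - i"
| "anchor n vc = 2*n + 3"
| "anchor n va = 0"
| "anchor n vf = n + 2"
| "anchor n vg = n + 1"
| "anchor n vh = n + 2"

definition anchor2 :: "nat \<Rightarrow> vtx \<Rightarrow> nat" where
  "anchor2 n v = (if v = va then 2*n + 3 else anchor n v)"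

definition cyc_vtx :: "nat \<Rightarrow> nat \<Rightarrow> vtx" where
  "cyc_vtx n q = (if q = 0 then vb else if q \<le> n then P q else if q = n + 1 then vd
     else if q = n + 2 then ve else if q \<le> 2*n + 2 then Q (2*n + 3 - q) else vc)"

lemma on_cycle_cyc_vtx [simp]: "on_cycle (cyc_vtx n q)"
  unfolding cyc_vtx_def by simp

lemma anchor_cyc_vtx [simp]: "q < 2*n + 4 \<Longrightarrow> anchor n (cyc_vtx n q) = q"
  unfolding cyc_vtx_def by auto

lemma anchor2_on_cycle: "on_cycle v \<Longrightarrow> anchor2 n v = anchor n v"
  unfolding anchor2_def by auto

lemma cyc_vtx_anchor: "v \<in> G3_verts n \<Longrightarrow> on_cycle v \<Longrightarrow> cyc_vtx n (anchor n v) = v"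
  unfolding G3_verts_def cyc_vtx_def by auto

lemma anchor_less: "v \<in> G3_verts n \<Longrightarrow> anchor n v < 2*n + 4"
  unfolding G3_verts_def by auto

lemma anchor2_less: "v \<in> G3_verts n \<Longrightarrow> anchor2 n v < 2*n + 4"
  unfolding anchor2_def using anchor_less by simp

lemma off_cycle_cases: "\<not> on_cycle v \<longleftrightarrow> v \<in> {va, vf, vg, vh}"
  by (cases v) auto

lemma G3_verts_eq: "G3_verts n = cyc_vtx n ` {..<2*n + 4} \<union> {va, vf, vg, vh}"
proof
  show "G3_verts n \<subseteq> cyc_vtx n ` {..<2*n + 4} \<union> {va, vf, vg, vh}"
    using cyc_vtx_anchor anchor_less off_cycle_cases by (metis UnCI imageI lessThan_iff subsetI)
  have "cyc_vtx n q \<in> G3_verts n" if "q < 2*n + 4" for q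
  proof -
    have "q \<le> 2*n + 2 \<Longrightarrow> n + 2 < q \<Longrightarrow> 2*n + 3 - q \<in> {1..n}" by auto
    then show ?thesis using that unfolding G3_verts_def cyc_vtx_def by auto
  qed
  then show "cyc_vtx n ` {..<2*n + 4} \<union> {va, vf, vg, vh} \<subseteq> G3_verts n"
    unfolding G3_verts_def by auto
qed

lemma inj_on_cyc_vtx: "inj_on (cyc_vtx n) {..<2*n + 4}"
  by (rule inj_on_inverseI[of _ "anchor n"]) simp

lemma cyc_vtx_image_disjoint: "cyc_vtx n ` {..<2*n + 4} \<inter> {va, vf, vg, vh} = {}"
  using on_cycle_cyc_vtx off_cycle_cases by blast

lemma card_G3_verts: "card (G3_verts n) = 2*n + 8"
  unfolding G3_verts_eq using inj_on_cyc_vtx cyc_vtx_image_disjoint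
  by (simp add: card_Un_disjoint card_image)

lemma base_edges: "{va, vb} \<in> G3_edges n" "{va, vc} \<in> G3_edges n" "{vb, vc} \<in> G3_edges n"
    "{vd, ve} \<in> G3_edges n" "{vd, vg} \<in> G3_edges n" "{ve, vf} \<in> G3_edges n"
    "{ve, vh} \<in> G3_edges n" "{vg, vh} \<in> G3_edges n"
  unfolding G3_edges_def by simp_all

lemma G3_edges_commute: "{x, y} \<in> G3_edges n \<longleftrightarrow> {y, x} \<in> G3_edges n"
  by (simp add: insert_commute)

lemma anchor_edges:
  assumes "\<not> on_cycle v"
  shows "{v, cyc_vtx n (anchor n v)} \<in> G3_edges n \<and> {v, cyc_vtx n (anchor2 n v)} \<in> G3_edges n"
  using assms base_edges unfolding off_cycle_cases
  by (auto simp: cyc_vtx_def anchor2_def insert_commute)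

lemma cyc_vtx_Suc_edge:
  assumes "n \<ge> 1" "Suc q < 2*n + 4"
  shows "{cyc_vtx n q, cyc_vtx n (Suc q)} \<in> G3_edges n"
proof -
  have path_edges: "{vb, P 1} \<in> G3_edges n" "{P n, vd} \<in> G3_edges n" "{Q 1, vc} \<in> G3_edges n"
    "{ve, Q n} \<in> G3_edges n"
    unfolding G3_edges_def by (simp_all add: insert_commute)
  have chain_edges: "{P i, P (Suc i)} \<in> G3_edges n \<and> {Q (Suc i), Q i} \<in> G3_edges n"
    if "1 \<le> i" "i < n" for i
  proof
    show "{P i, P (Suc i)} \<in> G3_edges n"
      unfolding G3_edges_def by (rule UnI1, rule UnI2) (use that in blast)
    show "{Q (Suc i), Q i} \<in> G3_edges n"
      unfolding G3_edges_def by (rule UnI2) (use that in \<open>auto simp: insert_commute\<close>)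
  qed
  consider "q = 0" | "1 \<le> q \<and> q < n" | "q = n" | "q = n + 1" | "q = n + 2"
    | "n + 3 \<le> q \<and> q \<le> 2*n + 1" | "q = 2*n + 2"
    using assms by linarith
  then show ?thesis
  proof cases
    case 6
    then have "2*n + 3 - q = Suc (2*n + 2 - q)" "2*n + 3 - Suc q = 2*n + 2 - q"
      "1 \<le> 2*n + 2 - q" "2*n + 2 - q < n" by auto
    with 6 show ?thesis using chain_edges[of "2*n + 2 - q"] by (simp add: cyc_vtx_def)
  qed (use assms path_edges chain_edges base_edges in \<open>simp_all add: cyc_vtx_def\<close>)
qed

lemma cyc_adj_edge:
  assumes "n \<ge> 1" "q < 2*n + 4" "k < 2*n + 4" "cyc_adj (2*n + 4) q k"
  shows "{cyc_vtx n q, cyc_vtx n k} \<in> G3_edges n"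
proof -
  have "{cyc_vtx n 0, cyc_vtx n (2*n + 4 - 1)} \<in> G3_edges n"
    using base_edges by (simp add: cyc_vtx_def)
  then show ?thesis
    using assms cyc_vtx_Suc_edge[of n q] cyc_vtx_Suc_edge[of n k] G3_edges_commute
    unfolding cyc_adj_def doubleton_eq_iff by auto
qed

definition off_edges :: "vtx set set" where
  "off_edges = {{va, vb}, {va, vc}, {vd, vg}, {ve, vf}, {ve, vh}, {vg, vh}}"

lemma G3_edge_cases:
  assumes "{x, y} \<in> G3_edges n" "n \<ge> 1"
  shows "(on_cycle x \<and> on_cycle y \<and> cyc_adj (2*n + 4) (anchor n x) (anchor n y))
    \<or> {x, y} \<in> off_edges"
proof -
  consider "{x, y} \<in> {{va, vb}, {va, vc}, {vb, vc}, {vd, ve}, {vd, vg}, {ve, vf}, {ve, vh}, {vg, vh}}"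
    | "{x, y} \<in> {{vb, P 1}, {P n, vd}, {vc, Q 1}, {Q n, ve}}"
    | i where "{x, y} = {P i, P (Suc i)}" "1 \<le> i" "i < n"
    | i where "{x, y} = {Q i, Q (Suc i)}" "1 \<le> i" "i < n"
  proof -
    have "{x,y} \<in> {{va, vb}, {va, vc}, {vb, vc}, {vd, ve}, {vd, vg}, {ve, vf}, {ve, vh}, {vg, vh}}
      \<or> {x, y} \<in> {{vb, P 1}, {P n, vd}, {vc, Q 1}, {Q n, ve}}
      \<or> (\<exists>i. {x, y} = {P i, P (Suc i)} \<and> 1 \<le> i \<and> i < n)
      \<or> (\<exists>i. {x, y} = {Q i, Q (Suc i)} \<and> 1 \<le> i \<and> i < n)"
      using assms(1) unfolding G3_edges_def Un_iff mem_Collect_eq by metis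
    then show ?thesis using that by metis
  qed
  then show ?thesis
  proof cases
    case 1
    then have "{x, y} = {vb, vc} \<or> {x, y} = {vd, ve} \<or> {x, y} \<in> off_edges"
      unfolding off_edges_def by (simp only: insert_iff empty_iff) (elim disjE; simp only: simp_thms)
    then show ?thesis by (auto simp: doubleton_eq_iff cyc_adj_def)
  next
    case 2
    then show ?thesis unfolding off_edges_def cyc_adj_def using assms(2)
      by (elim insertE emptyE; simp only: doubleton_eq_iff; elim disjE conjE; simp)
  qed (auto simp: cyc_adj_def doubleton_eq_iff)
qed

definition dist_to_cyc :: "nat \<Rightarrow> vtx \<Rightarrow> nat \<Rightarrow> nat" where
  "dist_to_cyc n u q = (if on_cycle u then 0 else 1)
     + min (cyc_dist (2*n + 4) (anchor n u) q) (cyc_dist (2*n + 4) (anchor2 n u) q)"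

definition off_dist :: "nat \<Rightarrow> vtx \<Rightarrow> vtx \<Rightarrow> nat" where
  "off_dist n u v = (if u = v then 0 else if u = va \<or> v = va then n + 3
     else if u = vf \<or> v = vf then (if u = vh \<or> v = vh then 2 else 3) else 1)"

definition G3_dist :: "nat \<Rightarrow> vtx \<Rightarrow> vtx \<Rightarrow> nat" where
  "G3_dist n u v = (if on_cycle v then dist_to_cyc n u (anchor n v)
     else if on_cycle u then dist_to_cyc n v (anchor n u) else off_dist n u v)"

lemma G3_dist_cyc_vtx: "q < 2*n + 4 \<Longrightarrow> G3_dist n u (cyc_vtx n q) = dist_to_cyc n u q"
  unfolding G3_dist_def by simp

lemma G3_dist_self: "G3_dist n u u = 0"
  unfolding G3_dist_def dist_to_cyc_def off_dist_def anchor2_def by simp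

lemma dist_to_cyc_adj_le:
  assumes "u \<in> G3_verts n" "q < 2*n + 4" "k < 2*n + 4" "cyc_adj (2*n + 4) q k"
  shows "dist_to_cyc n u k \<le> dist_to_cyc n u q + 1"
  using cyc_dist_adj_le[OF anchor_less[OF assms(1)] assms(2-4)]
    cyc_dist_adj_le[OF anchor2_less[OF assms(1)] assms(2-4)]
  unfolding dist_to_cyc_def by linarith

lemma off_edges_cases:
  assumes "{x, y} \<in> off_edges"
  shows "(x, y) \<in> {(va, vb), (va, vc), (vd, vg), (ve, vf), (ve, vh), (vg, vh),
                     (vb, va), (vc, va), (vg, vd), (vf, ve), (vh, ve), (vh, vg)}"
  using assms unfolding off_edges_def
  by (elim insertE emptyE; simp only: doubleton_eq_iff; elim disjE conjE; simp)

lemma G3_dist_off_edge_le: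
  assumes "u \<in> G3_verts n" "{x, y} \<in> off_edges"
  shows "G3_dist n u y \<le> G3_dist n u x + 1"
proof (cases "on_cycle u")
  case True
  let ?L = "2*n + 4" and ?s = "anchor n u"
  have step: "cyc_dist ?L ?s k \<le> cyc_dist ?L ?s j + 1" if "cyc_adj ?L j k" "j < ?L" "k < ?L" for j k
    using cyc_dist_adj_le[OF anchor_less[OF assms(1)]] that by blast
  have "cyc_dist ?L ?s 0 \<le> cyc_dist ?L ?s (2*n + 3) + 1"
    "cyc_dist ?L ?s (2*n + 3) \<le> cyc_dist ?L ?s 0 + 1"
    "cyc_dist ?L ?s (n + 1) \<le> cyc_dist ?L ?s (n + 2) + 1"
    "cyc_dist ?L ?s (n + 2) \<le> cyc_dist ?L ?s (n + 1) + 1"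
    by (rule step; simp add: cyc_adj_def doubleton_eq_iff)+
  then show ?thesis using off_edges_cases[OF assms(2)] True
    by (auto simp: G3_dist_def dist_to_cyc_def anchor2_def cyc_dist_commute[of _ ?s])
next
  case False
  then show ?thesis using off_edges_cases[OF assms(2)] unfolding off_cycle_cases
    by (elim insertE emptyE;
        simp add: G3_dist_def dist_to_cyc_def cyc_dist_def anchor2_def off_dist_def)
qed

lemma G3_dist_edge_le:
  assumes "n \<ge> 1" "u \<in> G3_verts n" "{x, y} \<in> G3_edges n" "x \<in> G3_verts n" "y \<in> G3_verts n"
  shows "G3_dist n u y \<le> G3_dist n u x + 1"
  using G3_edge_cases[OF assms(3,1)]
proof
  assume "on_cycle x \<and> on_cycle y \<and> cyc_adj (2*n + 4) (anchor n x) (anchor n y)"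
  then show ?thesis
    using dist_to_cyc_adj_le[OF assms(2) anchor_less[OF assms(4)] anchor_less[OF assms(5)]]
    by (simp add: G3_dist_def)
qed (rule G3_dist_off_edge_le[OF assms(2)])

lemma dist_to_cyc_descent:
  assumes "u \<in> G3_verts n" "q < 2*n + 4" "cyc_vtx n q \<noteq> u"
  shows "(\<exists>k<2*n + 4. cyc_adj (2*n + 4) q k \<and> dist_to_cyc n u k < dist_to_cyc n u q)
    \<or> (\<not> on_cycle u \<and> q \<in> {anchor n u, anchor2 n u})"
proof (cases "q \<in> {anchor n u, anchor2 n u}")
  case True
  then show ?thesis
    using assms cyc_vtx_anchor[OF assms(1)] by (auto simp: anchor2_def split: if_splits)
next
  case False
  obtain t where t: "t \<in> {anchor n u, anchor2 n u}"
    "cyc_dist (2*n + 4) t q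
      = min (cyc_dist (2*n + 4) (anchor n u) q) (cyc_dist (2*n + 4) (anchor2 n u) q)"
    by (metis insertCI min_def)
  have "t < 2*n + 4" "t \<noteq> q"
    using t(1) False anchor_less[OF assms(1)] anchor2_less[OF assms(1)] by auto
  then obtain k where "k < 2*n + 4" "cyc_adj (2*n + 4) q k"
    "cyc_dist (2*n + 4) t k < cyc_dist (2*n + 4) t q"
    using cyc_dist_descent assms(2) by blast
  moreover have "dist_to_cyc n u k < dist_to_cyc n u q"
    using t calculation(3) unfolding dist_to_cyc_def by auto
  ultimately show ?thesis by blast
qed

lemma G3_dist_descent_off_cycle:
  assumes "u \<in> G3_verts n" "\<not> on_cycle v" "u \<noteq> v"
  shows "G3_dist n u (cyc_vtx n (anchor n v)) < G3_dist n u v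
    \<or> G3_dist n u (cyc_vtx n (anchor2 n v)) < G3_dist n u v
    \<or> (u = vg \<and> v = vh) \<or> (u = vh \<and> v = vg)"
proof (cases "on_cycle u")
  case True
  let ?s = "anchor n u"
  have "G3_dist n u (cyc_vtx n t) = cyc_dist (2*n + 4) t ?s" if "t < 2*n + 4" for t
    using that True by (simp add: G3_dist_cyc_vtx dist_to_cyc_def anchor2_on_cycle cyc_dist_commute)
  moreover have "G3_dist n u v
      = 1 + min (cyc_dist (2*n + 4) (anchor n v) ?s) (cyc_dist (2*n + 4) (anchor2 n v) ?s)"
    using True assms(2) by (simp add: G3_dist_def dist_to_cyc_def)
  ultimately show ?thesis
    using anchor_less[of v n] anchor2_less[of v n] assms(2) unfolding off_cycle_cases
    by (auto simp: G3_verts_def)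
next
  case False
  have "u \<in> {va, vf, vg, vh}" "v \<in> {va, vf, vg, vh}"
    using False assms(2) unfolding off_cycle_cases by auto
  then show ?thesis using assms(3)
    by (elim insertE emptyE;
        simp add: G3_dist_def cyc_vtx_def dist_to_cyc_def cyc_dist_def anchor2_def off_dist_def)
qed

lemma G3_dist_descent:
  assumes "n \<ge> 1" "u \<in> G3_verts n" "v \<in> G3_verts n" "v \<noteq> u"
  shows "\<exists>w\<in>G3_verts n. {w, v} \<in> G3_edges n \<and> G3_dist n u w < G3_dist n u v"
proof (cases "on_cycle v")
  case True
  define q where "q = anchor n v"
  have q: "q < 2*n + 4" "v = cyc_vtx n q"
    unfolding q_def using anchor_less[OF assms(3)] cyc_vtx_anchor[OF assms(3) True] by auto
  have cyc_vtx_in: "cyc_vtx n k \<in> G3_verts n" if "k < 2*n + 4" for k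
    using that G3_verts_eq by blast
  have "cyc_vtx n q \<noteq> u" using q(2) assms(4) by simp
  from dist_to_cyc_descent[OF assms(2) q(1) this] show ?thesis
  proof (elim disjE exE conjE)
    fix k assume "k < 2*n + 4" "cyc_adj (2*n + 4) q k" "dist_to_cyc n u k < dist_to_cyc n u q"
    then show ?thesis
      using q cyc_vtx_in cyc_adj_edge[OF assms(1) q(1)] G3_edges_commute
      by (metis G3_dist_cyc_vtx)
  next
    assume "\<not> on_cycle u" "q \<in> {anchor n u, anchor2 n u}"
    then show ?thesis
      using q assms(2) anchor_edges[of u n] G3_dist_self[of n u]
      by (auto simp: G3_dist_cyc_vtx dist_to_cyc_def)
  qed
next
  case False
  have in_verts: "cyc_vtx n (anchor n v) \<in> G3_verts n" "cyc_vtx n (anchor2 n v) \<in> G3_verts n"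
    using anchor_less[OF assms(3)] anchor2_less[OF assms(3)] G3_verts_eq by blast+
  from G3_dist_descent_off_cycle[OF assms(2) False assms(4)[symmetric]] show ?thesis
  proof (elim disjE conjE)
    assume "G3_dist n u (cyc_vtx n (anchor n v)) < G3_dist n u v"
    moreover have "{cyc_vtx n (anchor n v), v} \<in> G3_edges n"
      using anchor_edges[OF False] by (simp add: insert_commute)
    ultimately show ?thesis using in_verts by blast
  next
    assume "G3_dist n u (cyc_vtx n (anchor2 n v)) < G3_dist n u v"
    moreover have "{cyc_vtx n (anchor2 n v), v} \<in> G3_edges n"
      using anchor_edges[OF False] by (simp add: insert_commute)
    ultimately show ?thesis using in_verts by blast
  next
    assume "u = vg" "v = vh"
    then show ?thesis using assms(2) base_edges
      by (intro bexI[of _ u]) (simp_all add: G3_dist_def off_dist_def)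
  next
    assume "u = vh" "v = vg"
    moreover have "{vh, vg} \<in> G3_edges n" using base_edges by (simp add: insert_commute)
    ultimately show ?thesis using assms(2)
      by (intro bexI[of _ u]) (simp_all add: G3_dist_def off_dist_def)
  qed
qed

lemma gdist_G3:
  assumes "n \<ge> 1" "u \<in> G3_verts n" "v \<in> G3_verts n"
  shows "gdist (G3_verts n) (G3_edges n) u v = G3_dist n u v"
  by (rule gdist_eqI[where f = "G3_dist n u"])
    (use assms G3_dist_self G3_dist_edge_le[OF assms(1,2)] G3_dist_descent[OF assms(1,2)]
      in simp_all)

section \<open>Transmissions\<close>

lemma transmission_G3_split:
  assumes "n \<ge> 1" "u \<in> G3_verts n"
  shows "transmission (G3_verts n) (G3_edges n) u
    = (\<Sum>q<2*n + 4. dist_to_cyc n u q)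
      + (G3_dist n u va + G3_dist n u vf + G3_dist n u vg + G3_dist n u vh)"
proof -
  have "transmission (G3_verts n) (G3_edges n) u = (\<Sum>v\<in>G3_verts n. G3_dist n u v)"
    unfolding transmission_def using gdist_G3[OF assms] by simp
  also have "\<dots> = (\<Sum>v\<in>cyc_vtx n ` {..<2*n + 4}. G3_dist n u v)
      + (\<Sum>v\<in>{va, vf, vg, vh}. G3_dist n u v)"
    unfolding G3_verts_eq using cyc_vtx_image_disjoint by (intro sum.union_disjoint) auto
  also have "(\<Sum>v\<in>cyc_vtx n ` {..<2*n + 4}. G3_dist n u v) = (\<Sum>q<2*n + 4. dist_to_cyc n u q)"
    by (simp add: sum.reindex[OF inj_on_cyc_vtx] G3_dist_cyc_vtx)
  finally show ?thesis by simp
qed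

lemma sum_dist_to_cyc:
  assumes "u \<in> G3_verts n"
  shows "(\<Sum>q<2*n + 4. dist_to_cyc n u q)
    = (if on_cycle u then 0 else 2*n + 4)
      + (if u = va then (n + 2) * (n + 1) else (n + 2) * (n + 2))"
proof -
  let ?m = "n + 2"
  have L: "2*n + 4 = 2*?m" by simp
  have "(\<Sum>q<2*?m. min (cyc_dist (2*?m) (anchor n u) q) (cyc_dist (2*?m) (anchor2 n u) q))
      = (if u = va then ?m * (?m - 1) else ?m * ?m)"
  proof (cases "u = va")
    case True
    then have "anchor n u = 0" "anchor2 n u = 2*?m - 1" by (simp_all add: anchor2_def)
    then show ?thesis using True sum_min_cyc_dist_ends[of ?m] by (simp only:) simp
  next
    case False
    then have "anchor2 n u = anchor n u" "anchor n u < 2*?m"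
      using anchor_less[OF assms] by (simp_all add: anchor2_def)
    then show ?thesis using False sum_cyc_dist[of "anchor n u" ?m] by (simp only: min.idem) simp
  qed
  then show ?thesis unfolding dist_to_cyc_def sum.distrib L by simp
qed

definition cyc_excess :: "nat \<Rightarrow> nat \<Rightarrow> nat" where
  "cyc_excess n s = (if s \<le> n + 1 then 3*n + 9 - 2*s else 2*s + 2 - n)"

definition G3_excess :: "nat \<Rightarrow> vtx \<Rightarrow> nat" where
  "G3_excess n u = (if on_cycle u then cyc_excess n (anchor n u)
     else if u = va then 4*n + 11 else if u = vf then 3*n + 12
     else if u = vg then 3*n + 11 else 3*n + 10)"

lemma transmission_G3:
  assumes "n \<ge> 1" "u \<in> G3_verts n"
  shows "transmission (G3_verts n) (G3_edges n) u = (n + 2)^2 + G3_excess n u"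
proof (cases "on_cycle u")
  case True
  have "anchor n u < 2*n + 4" using anchor_less[OF assms(2)] .
  then have "G3_dist n u va + G3_dist n u vf + G3_dist n u vg + G3_dist n u vh
      = cyc_excess n (anchor n u)"
    using True unfolding G3_dist_def dist_to_cyc_def cyc_dist_def anchor2_def cyc_excess_def
    by (simp; linarith)
  moreover have "u \<noteq> va" using True by auto
  ultimately show ?thesis using True
    by (simp add: transmission_G3_split[OF assms] sum_dist_to_cyc[OF assms(2)] G3_excess_def
        power2_eq_square)
next
  case False
  then show ?thesis
    using transmission_G3_split[OF assms] sum_dist_to_cyc[OF assms(2)] unfolding off_cycle_cases
    by (elim insertE emptyE;
        simp add: G3_excess_def G3_dist_def off_dist_def power2_eq_square algebra_simps)
qed

lemma cyc_excess_inj: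
  assumes "cyc_excess n s = cyc_excess n t"
  shows "s = t"
proof -
  have "2 * (s + t) \<noteq> 4*n + 7" by presburger
  then show ?thesis using assms unfolding cyc_excess_def by (auto split: if_splits)
qed

lemma G3_excess_range:
  assumes "u \<in> G3_verts n"
  shows "G3_excess n u \<in> {n + 6 .. 3*n + 12} \<union> {4*n + 11}"
  using anchor_less[OF assms] unfolding G3_excess_def cyc_excess_def by auto

lemma inj_on_G3_excess:
  assumes "n \<ge> 2"
  shows "inj_on (G3_excess n) (G3_verts n)"
proof (rule inj_onI)
  fix u v assume uv: "u \<in> G3_verts n" "v \<in> G3_verts n" "G3_excess n u = G3_excess n v"
  have cyc_le: "cyc_excess n s \<le> 3*n + 9" if "s < 2*n + 4" for s
    using that unfolding cyc_excess_def by auto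
  show "u = v"
  proof (cases "on_cycle u \<and> on_cycle v")
    case True
    then have "anchor n u = anchor n v"
      using uv(3) cyc_excess_inj unfolding G3_excess_def by simp
    then show ?thesis using True cyc_vtx_anchor uv(1,2) by metis
  next
    case False
    then show ?thesis
      using uv(3) assms cyc_le[OF anchor_less[OF uv(1)]] cyc_le[OF anchor_less[OF uv(2)]]
        off_cycle_cases[of u] off_cycle_cases[of v]
      unfolding G3_excess_def by (auto split: if_splits)
  qed
qed

theorem proposition3:
  fixes n :: nat
  assumes "n \<ge> 2"
  shows "transmission_irregular (G3_verts n) (G3_edges n)
    \<and> transmission (G3_verts n) (G3_edges n) ` G3_verts n
        = {n^2 + 5*n + 10 .. n^2 + 7*n + 16} \<union> {n^2 + 8*n + 15}"
proof -
  let ?V = "G3_verts n" and ?T = "transmission (G3_verts n) (G3_edges n)"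
  let ?S = "{n^2 + 5*n + 10 .. n^2 + 7*n + 16} \<union> {n^2 + 8*n + 15}"
  have T: "?T u = (n + 2)^2 + G3_excess n u" if "u \<in> ?V" for u
    using transmission_G3[OF _ that] assms by simp
  have inj: "inj_on ?T ?V"
    using inj_on_G3_excess[OF assms] by (simp add: inj_on_def T)
  have "?T u \<in> ?S" if "u \<in> ?V" for u
    using G3_excess_range[OF that] by (auto simp: T[OF that] power2_eq_square algebra_simps)
  then have "?T ` ?V \<subseteq> ?S" by blast
  moreover have "card ?S = card (?T ` ?V)"
    using assms by (simp add: card_image[OF inj] card_G3_verts)
  ultimately have "?T ` ?V = ?S"
    by (intro card_subset_eq) auto
  with inj show ?thesis
    unfolding transmission_irregular_def by simp
qed

end
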